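(* Let $M,N,d$ be positive integers. For $i=1,\dots,M$ and $j=1,\dots,N$ let $x_{ij}\in\mathbb{R}^d$ and $y_{ij}\in\{+1,-1\}$, where the points $(x_{ij})$ are drawn from a continuous (absolutely continuous) distribution and the dataset satisfies the separability assumption: each $C_i=\{w\in\mathbb{R}^d:\ y_{ij}x_{ij}^Tw\ge 1,\ j=1,\dots,N\}$ is nonempty and $\bar C=\bigcap_{i=1}^M C_i\neq\emptyset$. For $\lambda>0$ define Local-GD iterates by $w_0^0=0$ and, for $k\ge 0$, $$w_i^{k+1}=\arg\min_{w\in\mathbb{R}^d}\ \sum_{j=1}^N\exp(-y_{ij}x_{ij}^Tw)+\frac{\lambda}{2}\|w-w_0^k\|^2,\qquad w_0^{k+1}=\frac1M\sum_{i=1}^M w_i^{k+1},$$ and define the Parallel Projection (local max-margin) iterates by $\bar w_0^0=0$ and $$\bar w_i^{k+1}=\arg\min_{w\in\mathbb{R}^d}\|w-\bar w_0^k\|\ \text{ s.t. }\ y_{ij}x_{ij}^Tw\ge1\ (j=1,\dots,N),\qquad \bar w_0^{k+1}=\frac1M\sum_{i=1}^M\bar w_i^{k+1}.$$ Then for almost all such datasets, $w_0^k\to\ln(1/\lambda)\,\bar w_0^k$ in the sense that $\|w_0^k-\ln(1/\lambda)\bar w_0^k\|=O(k\ln\ln(1/\lambda))$ as $\lambda\to0$. Consequently, at any round $k=o\!\left(\frac{\ln(1/\lambda)}{\ln\ln(1/\lambda)}\right)$, $$\lim_{\lambda\to0}\frac{w_0^k}{\|w_0^k\|}=\frac{\bar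 w_0^k}{\|\bar w_0^k\|}.$$
   Context: This is Local-GD for binary linear classification over $M$ compute nodes, node $i$ holding samples $(x_{ij},y_{ij})_{j=1}^N$; each local strongly convex problem (exponential loss plus weak proximal regularization with parameter $\lambda$) is solved exactly (its unique minimizer) in every round. The second sequence is the Parallel Projection Method: $\bar w_i^{k+1}$ is the Euclidean projection of $\bar w_0^k$ onto the closed convex set $C_i$. *)

theory Defs
  imports "HOL-Analysis.Analysis" "HOL-Library.Landau_Symbols"
begin

text \<open>Dataset: X $ i $ j = x_ij in R^d (i a node, j a sample), labels y i j in {+1,-1}.
  Node index type 'm (M = CARD('m)), sample index type 'n (N = CARD('n)),
  dimension type 'd (d = CARD('d)).\<close>

definition Cset :: "real^'d^'n^'m \<Rightarrow> ('m \<Rightarrow> 'n \<Rightarrow> real) \<Rightarrow> 'm \<Rightarrow> (real^'d) set" where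
  "Cset X y i = {w. \<forall>j. y i j * (X $ i $ j \<bullet> w) \<ge> 1}"

definition separable :: "real^'d^'n^'m \<Rightarrow> ('m \<Rightarrow> 'n \<Rightarrow> real) \<Rightarrow> bool" where
  "separable X y \<longleftrightarrow> (\<forall>i. Cset X y i \<noteq> {}) \<and> (\<Inter>i. Cset X y i) \<noteq> {}"

definition local_obj :: "real^'d^'n^'m \<Rightarrow> ('m \<Rightarrow> 'n \<Rightarrow> real) \<Rightarrow> real \<Rightarrow> real^'d \<Rightarrow> 'm \<Rightarrow> real^'d \<Rightarrow> real" where
  "local_obj X y lam w0 i w =
     (\<Sum>j\<in>UNIV. exp (- (y i j * (X $ i $ j \<bullet> w)))) + lam / 2 * (norm (w - w0))^2"

definition local_min :: "real^'d^'n^'m \<Rightarrow> ('m \<Rightarrow> 'n \<Rightarrow> real) \<Rightarrow> real \<Rightarrow> real^'d \<Rightarrow> 'm \<Rightarrow> real^'d" where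
  "local_min X y lam w0 i = (THE w. \<forall>v. local_obj X y lam w0 i w \<le> local_obj X y lam w0 i v)"

primrec lgd :: "real^'d^'n^'m \<Rightarrow> ('m \<Rightarrow> 'n \<Rightarrow> real) \<Rightarrow> real \<Rightarrow> nat \<Rightarrow> real^'d" where
  "lgd X y lam 0 = 0"
| "lgd X y lam (Suc k) = (1 / real CARD('m)) *\<^sub>R (\<Sum>i\<in>UNIV. local_min X y lam (lgd X y lam k) i)"

primrec ppm :: "real^'d^'n^'m \<Rightarrow> ('m \<Rightarrow> 'n \<Rightarrow> real) \<Rightarrow> nat \<Rightarrow> real^'d" where
  "ppm X y 0 = 0"
| "ppm X y (Suc k) = (1 / real CARD('m)) *\<^sub>R (\<Sum>i\<in>UNIV. closest_point (Cset X y i) (ppm X y k))"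

end

theory Submission
  imports Defs
begin

text \<open>
  Write a_ij = y_ij x_ij and L = ln (1/lam). The local minimiser w centred at L u is characterised
  by w - L u = sum_j exp (L - a_j . w) a_j. For c in C_i, comparison with the minimiser near L c
  gives |w - L u| = O(L), and testing the identity against c shows that the weights sum to O(L).
  So every margin a_j . w is at least L - O(ln L), while the constraints with margin above L + ln L
  carry weight below 1/L. Dropping the latter, w is exactly the projection of a point within O(1)
  of L u onto the polyhedron {v. a_j . v >= beta_j} with |beta_j - L| = O(ln L). Projection onto
  {v. a_j . v >= b_j} is 1-Lipschitz in the point and, by a Hoffman-type argument, Lipschitz in b;
  since projecting L u onto {v. a_j . v >= L} gives L P_i u, with P_i the projection onto C_i, the
  local step lies within O(ln L) of L P_i u. The local solution map is nonexpansive in its centre,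
  so the errors add up to O(k ln L) after k rounds. The PPM iterates are Fejer monotone towards a
  point of the intersection, strictly so in the first round because 0 lies in no C_i; hence they
  are bounded away from 0 for k >= 1, which turns the error bound into convergence of directions
  when k ln L = o(L).
\<close>

section \<open>Projections onto closed convex sets\<close>

lemma closest_point_eqI:
  fixes S :: "'v::euclidean_space set"
  assumes "convex S" "closed S" "w \<in> S" "\<And>z. z \<in> S \<Longrightarrow> (x - w) \<bullet> (z - w) \<le> 0"
  shows "closest_point S x = w"
proof -
  have "dist x w \<le> dist x z" if "z \<in> S" for z
  proof -
    have "(dist x z)\<^sup>2 = (dist x w)\<^sup>2 - 2 * ((x - w) \<bullet> (z - w)) + (norm (z - w))\<^sup>2"
      by (simp add: dist_norm power2_norm_eq_inner algebra_simps inner_commute)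
    then have "(dist x w)\<^sup>2 \<le> (dist x z)\<^sup>2"
      using assms(4)[OF that] zero_le_power2[of "norm (z - w)"] by linarith
    then show ?thesis by (simp add: power2_le_iff_abs_le)
  qed
  then show ?thesis using closest_point_unique[OF assms(1-3)] by metis
qed

lemma closest_point_scaleR:
  fixes S :: "'v::euclidean_space set"
  assumes "convex S" "closed S" "S \<noteq> {}" "L > 0"
  shows "closest_point ((*\<^sub>R) L ` S) (L *\<^sub>R x) = L *\<^sub>R closest_point S x"
proof (rule closest_point_unique[symmetric])
  show "convex ((*\<^sub>R) L ` S)" using assms(1) by (rule convex_scaling)
  show "closed ((*\<^sub>R) L ` S)" using assms(2,4) by (simp add: closed_scaling)
  show "L *\<^sub>R closest_point S x \<in> (*\<^sub>R) L ` S" using closest_point_in_set[OF assms(2,3)] by blast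
  show "\<forall>z\<in>(*\<^sub>R) L ` S. dist (L *\<^sub>R x) (L *\<^sub>R closest_point S x) \<le> dist (L *\<^sub>R x) z"
    using closest_point_le[OF assms(2)] assms(4) by (auto simp: dist_norm scaleR_diff_right[symmetric])
qed

lemma dist_closest_point_less:
  fixes S :: "'v::euclidean_space set"
  assumes "convex S" "closed S" "z \<in> S" "x \<notin> S"
  shows "dist (closest_point S x) z < dist x z"
proof -
  define p where "p = closest_point S x"
  have "p \<in> S" unfolding p_def using assms by (auto intro: closest_point_in_set)
  then have "x \<noteq> p" using assms(4) by blast
  have "(x - p) \<bullet> (z - p) \<le> 0" unfolding p_def by (rule closest_point_dot[OF assms(1-3)])
  moreover have "(dist x z)\<^sup>2 = (norm (x - p))\<^sup>2 - 2 * ((x - p) \<bullet> (z - p)) + (dist p z)\<^sup>2"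
    by (simp add: dist_norm power2_norm_eq_inner algebra_simps inner_commute)
  moreover have "(norm (x - p))\<^sup>2 > 0" using \<open>x \<noteq> p\<close> by simp
  ultimately have "(dist p z)\<^sup>2 < (dist x z)\<^sup>2" by linarith
  then show ?thesis unfolding p_def by (simp add: power2_less_imp_less)
qed

lemma dist_closest_points_sq_le:
  fixes A B :: "'v::euclidean_space set"
  assumes A: "convex A" "closed A" "A \<noteq> {}" and B: "convex B" "closed B" "B \<noteq> {}"
    and AB: "\<And>p. p \<in> A \<Longrightarrow> \<exists>q\<in>B. dist p q \<le> h" and BA: "\<And>q. q \<in> B \<Longrightarrow> \<exists>p\<in>A. dist p q \<le> h"
  shows "(dist (closest_point A x) (closest_point B x))\<^sup>2
           \<le> h * (dist x (closest_point A x) + dist x (closest_point B x))"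
proof -
  define p q where "p = closest_point A x" and "q = closest_point B x"
  have "p \<in> A" "q \<in> B" unfolding p_def q_def using A B by (auto intro: closest_point_in_set)
  then obtain p' q' where p': "p' \<in> B" "dist p p' \<le> h" and q': "q' \<in> A" "dist q' q \<le> h"
    using AB BA by blast
  have "(x - p) \<bullet> (q - p) = (x - p) \<bullet> (q' - p) + (x - p) \<bullet> (q - q')"
    by (simp add: inner_diff_right)
  also have "\<dots> \<le> 0 + dist x p * h"
    using closest_point_dot[OF A(1,2) q'(1)] norm_cauchy_schwarz[of "x - p" "q - q'"] q'(2)
      mult_left_mono[of "dist q' q" h "dist x p"]
    unfolding p_def by (intro add_mono) (auto simp: dist_norm norm_minus_commute)
  finally have 1: "(x - p) \<bullet> (q - p) \<le> dist x p * h" by simp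
  have "(x - q) \<bullet> (p - q) = (x - q) \<bullet> (p' - q) + (x - q) \<bullet> (p - p')"
    by (simp add: inner_diff_right)
  also have "\<dots> \<le> 0 + dist x q * h"
    using closest_point_dot[OF B(1,2) p'(1)] norm_cauchy_schwarz[of "x - q" "p - p'"] p'(2)
      mult_left_mono[of "dist p p'" h "dist x q"]
    unfolding q_def by (intro add_mono) (auto simp: dist_norm)
  finally have 2: "(x - q) \<bullet> (p - q) \<le> dist x q * h" by simp
  have "(dist p q)\<^sup>2 = (x - p) \<bullet> (q - p) + (x - q) \<bullet> (p - q)"
    by (simp add: dist_norm power2_norm_eq_inner algebra_simps inner_commute)
  with 1 2 show ?thesis unfolding p_def q_def by (simp add: algebra_simps)
qed

section \<open>Polyhedral sets\<close>

definition polyhedral_set :: "('n::finite \<Rightarrow> 'v::real_inner) \<Rightarrow> ('n \<Rightarrow> real) \<Rightarrow> 'v set" where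
  "polyhedral_set a b = {w. \<forall>j. b j \<le> a j \<bullet> w}"

lemma polyhedral_set_eq_Inter: "polyhedral_set a b = (\<Inter>j. {w. a j \<bullet> w \<ge> b j})"
  unfolding polyhedral_set_def by auto

lemma closed_polyhedral_set: "closed (polyhedral_set a b)"
  unfolding polyhedral_set_eq_Inter by (intro closed_INT ballI closed_halfspace_ge)

lemma convex_polyhedral_set: "convex (polyhedral_set a b)"
  unfolding polyhedral_set_eq_Inter by (intro convex_INT ballI convex_halfspace_ge)

lemma polyhedral_set_nonempty:
  assumes c: "\<forall>j. 1 \<le> a j \<bullet> c"
  shows "polyhedral_set a b \<noteq> {}"
proof -
  define s where "s = (\<Sum>j\<in>UNIV. \<bar>b j\<bar>)"
  have "b j \<le> a j \<bullet> (s *\<^sub>R c)" for j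
  proof -
    have "b j \<le> s" unfolding s_def using member_le_sum[of j UNIV "\<lambda>j. \<bar>b j\<bar>"] by simp
    also have "\<dots> \<le> s * (a j \<bullet> c)"
      using c mult_left_mono[of 1 "a j \<bullet> c" s] by (simp add: s_def sum_nonneg)
    finally show ?thesis by simp
  qed
  then show ?thesis unfolding polyhedral_set_def by blast
qed

lemma polyhedral_set_near:
  assumes c: "\<forall>j. 1 \<le> a j \<bullet> c" and p: "p \<in> polyhedral_set a b"
  shows "\<exists>q\<in>polyhedral_set a b'. dist p q \<le> (\<Sum>j\<in>UNIV. \<bar>b' j - b j\<bar>) * norm c"
proof
  define \<delta> where "\<delta> = (\<Sum>j\<in>UNIV. \<bar>b' j - b j\<bar>)"
  have "b' j \<le> a j \<bullet> (p + \<delta> *\<^sub>R c)" for j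
  proof -
    have "b' j \<le> b j + \<delta> * 1"
      using member_le_sum[of j UNIV "\<lambda>j. \<bar>b' j - b j\<bar>"] unfolding \<delta>_def by simp
    also have "\<dots> \<le> a j \<bullet> p + \<delta> * (a j \<bullet> c)"
      using p c by (intro add_mono mult_left_mono) (auto simp: polyhedral_set_def \<delta>_def sum_nonneg)
    finally show ?thesis by (simp add: inner_add_right)
  qed
  then show "p + \<delta> *\<^sub>R c \<in> polyhedral_set a b'" unfolding polyhedral_set_def by blast
  show "dist p (p + \<delta> *\<^sub>R c) \<le> \<delta> * norm c" by (simp add: dist_norm \<delta>_def sum_nonneg)
qed

lemma polyhedral_set_scaleR:
  assumes "L > 0"
  shows "polyhedral_set a (\<lambda>j. L * b j) = (*\<^sub>R) L ` polyhedral_set a b"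
proof -
  have "w \<in> polyhedral_set a (\<lambda>j. L * b j) \<longleftrightarrow> (1 / L) *\<^sub>R w \<in> polyhedral_set a b" for w
    using assms by (simp add: polyhedral_set_def field_simps)
  then show ?thesis using assms by (force simp: image_iff)
qed

lemma closest_point_polyhedral_set_scaleR:
  fixes a :: "'n::finite \<Rightarrow> 'v::euclidean_space"
  assumes c: "\<forall>j. 1 \<le> a j \<bullet> c" and "L > 0"
  shows "closest_point (polyhedral_set a (\<lambda>j. L * b j)) (L *\<^sub>R x) = L *\<^sub>R closest_point (polyhedral_set a b) x"
  unfolding polyhedral_set_scaleR[OF \<open>L > 0\<close>]
  by (rule closest_point_scaleR[OF convex_polyhedral_set closed_polyhedral_set polyhedral_set_nonempty[OF c] \<open>L > 0\<close>])

lemma closest_point_polyhedral_set_eqI: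
  fixes a :: "'n::finite \<Rightarrow> 'v::euclidean_space"
  assumes w: "w \<in> polyhedral_set a b" and \<mu>: "\<And>j. \<mu> j \<ge> 0" "\<And>j. \<mu> j > 0 \<Longrightarrow> a j \<bullet> w = b j"
    and x: "w - x = (\<Sum>j\<in>UNIV. \<mu> j *\<^sub>R a j)"
  shows "closest_point (polyhedral_set a b) x = w"
proof (rule closest_point_eqI[OF convex_polyhedral_set closed_polyhedral_set w])
  fix z assume z: "z \<in> polyhedral_set a b"
  have "\<mu> j * (a j \<bullet> z - a j \<bullet> w) \<ge> 0" for j
  proof (cases "\<mu> j > 0")
    case True
    then show ?thesis using z \<mu>(2)[OF True] by (simp add: polyhedral_set_def)
  qed (use \<mu>(1)[of j] in simp)
  moreover have "(x - w) \<bullet> (z - w) = - ((w - x) \<bullet> (z - w))"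
    by (simp add: inner_diff_left)
  then have "(x - w) \<bullet> (z - w) = - (\<Sum>j\<in>UNIV. \<mu> j * (a j \<bullet> z - a j \<bullet> w))"
    unfolding x by (simp add: inner_sum_left inner_diff_right right_diff_distrib sum_subtractf)
  ultimately show "(x - w) \<bullet> (z - w) \<le> 0" by (simp add: sum_nonneg)
qed

lemma closest_point_polyhedral_set_orthogonal:
  fixes a :: "'n::finite \<Rightarrow> 'v::euclidean_space" and b x
  defines "p \<equiv> closest_point (polyhedral_set a b) x"
  assumes ne: "polyhedral_set a b \<noteq> {}" and v: "\<And>j. a j \<bullet> p = b j \<Longrightarrow> a j \<bullet> v = 0"
  shows "(x - p) \<bullet> v = 0"
proof -
  have p: "p \<in> polyhedral_set a b"
    unfolding p_def by (rule closest_point_in_set[OF closed_polyhedral_set ne])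
  have "\<forall>\<^sub>F e in at_right (0::real). e * \<bar>a j \<bullet> v\<bar> \<le> a j \<bullet> p - b j" for j
  proof (cases "a j \<bullet> p = b j")
    case True
    then show ?thesis using v by simp
  next
    case False
    moreover have "b j \<le> a j \<bullet> p" using p by (simp add: polyhedral_set_def)
    ultimately have "a j \<bullet> p - b j > 0" by linarith
    moreover have "((\<lambda>e. e * \<bar>a j \<bullet> v\<bar>) \<longlongrightarrow> 0) (at_right 0)"
      by (intro tendsto_eq_intros) auto
    ultimately have "\<forall>\<^sub>F e in at_right 0. e * \<bar>a j \<bullet> v\<bar> < a j \<bullet> p - b j"
      by (rule order_tendstoD(2)[rotated])
    then show ?thesis by (rule eventually_mono) simp
  qed
  then have "\<forall>\<^sub>F e in at_right (0::real). e > 0 \<and> (\<forall>j. e * \<bar>a j \<bullet> v\<bar> \<le> a j \<bullet> p - b j)"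
    by (intro eventually_conj eventually_at_right_less eventually_all_finite) auto
  then obtain e where e: "e > 0" "\<And>j. e * \<bar>a j \<bullet> v\<bar> \<le> a j \<bullet> p - b j"
    using eventually_happens[of _ "at_right (0::real)"] by auto
  have "(x - p) \<bullet> (s *\<^sub>R v) \<le> 0" if "\<bar>s\<bar> = e" for s
  proof -
    have "b j \<le> a j \<bullet> p + s * (a j \<bullet> v)" for j
      using e(2)[of j] that abs_le_iff[of "s * (a j \<bullet> v)"] by (auto simp: abs_mult)
    then have "p + s *\<^sub>R v \<in> polyhedral_set a b" by (simp add: polyhedral_set_def inner_add_right)
    from closest_point_dot[OF convex_polyhedral_set closed_polyhedral_set this, of x]
    show ?thesis by (simp add: p_def)
  qed
  from this[of e] this[of "- e"] e(1) show ?thesis by (simp add: zero_le_mult_iff mult_le_0_iff)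
qed

lemma continuous_on_closest_point_polyhedral_path:
  fixes a :: "'n::finite \<Rightarrow> 'v::euclidean_space"
  assumes c: "\<forall>j. 1 \<le> a j \<bullet> c"
  shows "continuous_on UNIV (\<lambda>t. closest_point (polyhedral_set a (\<lambda>j. b j + t * d j)) x)"
proof -
  define P where "P t = polyhedral_set a (\<lambda>j. b j + t * d j)" for t
  define g where "g t = closest_point (P t) x" for t
  define K where "K = (\<Sum>j\<in>UNIV. \<bar>d j\<bar>) * norm c"
  have P: "convex (P t)" "closed (P t)" "P t \<noteq> {}" for t
    unfolding P_def by (simp_all add: convex_polyhedral_set closed_polyhedral_set polyhedral_set_nonempty[OF c])
  have near: "\<exists>q\<in>P s. dist p q \<le> \<bar>s - t\<bar> * K" if "p \<in> P t" for p s t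
    using polyhedral_set_near[OF c that[unfolded P_def], of "\<lambda>j. b j + s * d j"]
    by (simp add: P_def K_def abs_mult mult.assoc flip: left_diff_distrib sum_distrib_left)
  have bound: "(dist (g s) (g t))\<^sup>2 \<le> \<bar>s - t\<bar> * K * (2 * dist x (g t) + \<bar>s - t\<bar> * K)" for s t
  proof -
    obtain q where q: "q \<in> P s" "dist (g t) q \<le> \<bar>s - t\<bar> * K"
      using near[OF closest_point_in_set[OF P(2,3)]] unfolding g_def by blast
    then have "dist x (g s) \<le> dist x (g t) + \<bar>s - t\<bar> * K"
      using closest_point_le[OF P(2) q(1), of x] dist_triangle[of x q "g t"] unfolding g_def by linarith
    have "(dist (g s) (g t))\<^sup>2 \<le> \<bar>s - t\<bar> * K * (dist x (g s) + dist x (g t))"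
      unfolding g_def using near[of _ t s] near[of _ s t]
      by (intro dist_closest_points_sq_le[OF P P]) (force simp: abs_minus_commute dist_commute)+
    also have "\<dots> \<le> \<bar>s - t\<bar> * K * (2 * dist x (g t) + \<bar>s - t\<bar> * K)"
      using \<open>dist x (g s) \<le> _\<close> by (intro mult_left_mono) (auto simp: K_def sum_nonneg)
    finally show ?thesis .
  qed
  have "isCont g t" for t
  proof -
    have lim: "((\<lambda>s. \<bar>s - t\<bar> * K * (2 * dist x (g t) + \<bar>s - t\<bar> * K)) \<longlongrightarrow> 0) (at t)"
      by (intro tendsto_eq_intros) auto
    have "((\<lambda>s. (dist (g s) (g t))\<^sup>2) \<longlongrightarrow> 0) (at t)"
      by (rule tendsto_sandwich[OF _ _ tendsto_const lim]) (simp_all add: bound)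
    then have "((\<lambda>s. sqrt ((dist (g s) (g t))\<^sup>2)) \<longlongrightarrow> sqrt 0) (at t)"
      by (rule tendsto_real_sqrt)
    then have "((\<lambda>s. dist (g s) (g t)) \<longlongrightarrow> 0) (at t)" by simp
    then show ?thesis unfolding isCont_def by (rule tendsto_dist_iff[THEN iffD2])
  qed
  then show ?thesis unfolding g_def P_def by (simp add: continuous_at_imp_continuous_on)
qed

section \<open>Lipschitz dependence of the projection on the right-hand side\<close>

lemma kernel_orthogonal_norm_le_sum:
  fixes a :: "'n::finite \<Rightarrow> 'v::euclidean_space" and A :: "'n set"
  shows "\<exists>e>0. \<forall>z. (\<forall>v. (\<forall>j\<in>A. a j \<bullet> v = 0) \<longrightarrow> z \<bullet> v = 0) \<longrightarrow> e * norm z \<le> (\<Sum>j\<in>A. \<bar>a j \<bullet> z\<bar>)"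
proof -
  define S where "S = {z::'v. \<forall>v. (\<forall>j\<in>A. a j \<bullet> v = 0) \<longrightarrow> z \<bullet> v = 0}"
  define f where "f z = (\<chi> j::'n. if j \<in> A then a j \<bullet> z else 0)" for z
  have "S = (\<Inter>v\<in>{v. \<forall>j\<in>A. a j \<bullet> v = 0}. {z. v \<bullet> z = 0})"
    unfolding S_def by (auto simp: inner_commute)
  then have cl: "closed S" by (auto intro!: closed_INT closed_hyperplane)
  have sub: "subspace S" unfolding subspace_def S_def by (auto simp: inner_add_left)
  have bl: "bounded_linear f"
    unfolding f_def linear_conv_bounded_linear[symmetric]
    by (rule linearI) (auto simp: vec_eq_iff inner_add_right)
  have inj: "\<forall>z\<in>S. f z = 0 \<longrightarrow> z = 0"
  proof (intro ballI impI)
    fix z assume "z \<in> S" "f z = 0"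
    then have "\<forall>j\<in>A. a j \<bullet> z = 0" unfolding f_def by (auto simp: vec_eq_iff) (metis (full_types))
    with \<open>z \<in> S\<close> have "z \<bullet> z = 0" unfolding S_def by blast
    then show "z = 0" by simp
  qed
  obtain e where e: "e > 0" "\<And>z. z \<in> S \<Longrightarrow> e * norm z \<le> norm (f z)"
    using injective_imp_isometric[OF cl sub bl inj] by blast
  have nf: "norm (f z) \<le> (\<Sum>j\<in>A. \<bar>a j \<bullet> z\<bar>)" for z
  proof -
    have "norm (f z) \<le> (\<Sum>j\<in>UNIV. \<bar>f z $ j\<bar>)" by (rule norm_le_l1_cart)
    also have "\<dots> = (\<Sum>j\<in>UNIV. if j \<in> A then \<bar>a j \<bullet> z\<bar> else 0)"
      unfolding f_def by (intro sum.cong) auto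
    also have "\<dots> = (\<Sum>j\<in>A. \<bar>a j \<bullet> z\<bar>)" by (simp add: sum.If_cases)
    finally show ?thesis .
  qed
  show ?thesis
  proof (intro exI[of _ e] conjI allI impI)
    fix z assume "\<forall>v. (\<forall>j\<in>A. a j \<bullet> v = 0) \<longrightarrow> z \<bullet> v = 0"
    then have "z \<in> S" unfolding S_def by blast
    from order_trans[OF e(2)[OF this] nf] show "e * norm z \<le> (\<Sum>j\<in>A. \<bar>a j \<bullet> z\<bar>)" .
  qed (rule e(1))
qed

lemma kernel_orthogonal_norm_le_sum_uniform:
  fixes a :: "'n::finite \<Rightarrow> 'v::euclidean_space"
  shows "\<exists>e>0. \<forall>A z. (\<forall>v. (\<forall>j\<in>A. a j \<bullet> v = 0) \<longrightarrow> z \<bullet> v = 0) \<longrightarrow> e * norm z \<le> (\<Sum>j\<in>A. \<bar>a j \<bullet> z\<bar>)"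
proof -
  have "\<forall>A. \<exists>e>0. \<forall>z. (\<forall>v. (\<forall>j\<in>A. a j \<bullet> v = 0) \<longrightarrow> z \<bullet> v = 0) \<longrightarrow> e * norm z \<le> (\<Sum>j\<in>A. \<bar>a j \<bullet> z\<bar>)"
    using kernel_orthogonal_norm_le_sum by blast
  from choice[OF this] obtain E where E: "\<And>A. E A > 0"
    "\<And>A z. (\<forall>v. (\<forall>j\<in>A. a j \<bullet> v = 0) \<longrightarrow> z \<bullet> v = 0) \<Longrightarrow> E A * norm z \<le> (\<Sum>j\<in>A. \<bar>a j \<bullet> z\<bar>)"
    by blast
  define e where "e = Min (range E)"
  have "e > 0" unfolding e_def using E(1) by simp
  moreover have "e * norm z \<le> E A * norm z" for A z
    unfolding e_def by (intro mult_right_mono) auto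
  ultimately show ?thesis using E(2) by (meson order_trans)
qed

lemma lipschitz_on_closed_cover:
  fixes f :: "real \<Rightarrow> 'a::metric_space"
  assumes cont: "continuous_on {a..b} f" and F: "finite F" "{a..b} \<subseteq> \<Union>F" "\<And>T. T \<in> F \<Longrightarrow> closed T"
    and lip: "\<And>T. T \<in> F \<Longrightarrow> M-lipschitz_on T f" and "M \<ge> 0"
  shows "M-lipschitz_on {a..b} f"
proof (rule locally_lipschitz_imp_lipschitz[OF cont _ \<open>M \<ge> 0\<close>])
  fix x y assume x: "x \<in> {a..<b}" and "y > x"
  define U where "U = \<Union>{T\<in>F. x \<notin> T}"
  have "closed U" unfolding U_def using F by (intro closed_Union) auto
  then have "open (- U)" "x \<in> - U" by (auto simp: U_def)
  then obtain r where r: "r > 0" "ball x r \<subseteq> - U" by (meson open_contains_ball)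
  define z where "z = min (min y b) (x + r / 2)"
  have z: "z \<in> {x<..y}" "z \<in> {a..b}" "dist z x < r"
    using x \<open>y > x\<close> r(1) by (auto simp: z_def dist_real_def)
  then obtain T where "T \<in> F" "z \<in> T" "x \<in> T"
    using F(2) r(2) by (force simp: U_def dist_commute)
  then have "dist (f z) (f x) \<le> M * (z - x)"
    using lipschitz_onD[OF lip] z(1) by (fastforce simp: dist_real_def)
  with z(1) show "\<exists>z\<in>{x<..y}. dist (f z) (f x) \<le> M * (z - x)" by blast
qed

lemma lipschitz_on_finite_level_sets:
  fixes g :: "real \<Rightarrow> 'a::metric_space" and f :: "real \<Rightarrow> 'k::finite"
  assumes cont: "continuous_on UNIV g" and lip: "\<And>A. M-lipschitz_on {t. f t = A} g" and "M \<ge> 0"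
  shows "M-lipschitz_on {a..b} g"
proof (rule lipschitz_on_closed_cover)
  show "continuous_on {a..b} g" using cont by (rule continuous_on_subset) simp
  show "finite ((\<lambda>A. closure {t. f t = A}) ` UNIV)" by simp
  show "{a..b} \<subseteq> \<Union>((\<lambda>A. closure {t. f t = A}) ` UNIV)"
  proof
    fix t :: real
    have "t \<in> closure {s. f s = f t}" by (rule closure_subset[THEN subsetD]) simp
    then show "t \<in> \<Union>((\<lambda>A. closure {t. f t = A}) ` UNIV)" by blast
  qed
  show "M-lipschitz_on T g" if T: "T \<in> (\<lambda>A. closure {t. f t = A}) ` UNIV" for T
  proof -
    obtain A where "T = closure {t. f t = A}" using T by blast
    then show ?thesis using lip[of A] continuous_on_subset[OF cont] by (simp add: lipschitz_on_closure)
  qed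
qed (use \<open>M \<ge> 0\<close> in auto)

lemma closest_point_polyhedral_set_dist_le_same_active:
  fixes a :: "'n::finite \<Rightarrow> 'v::euclidean_space"
  assumes c: "\<forall>j. 1 \<le> a j \<bullet> c"
    and e: "\<And>z. (\<forall>v. (\<forall>j\<in>A. a j \<bullet> v = 0) \<longrightarrow> z \<bullet> v = 0) \<Longrightarrow> e * norm z \<le> (\<Sum>j\<in>A. \<bar>a j \<bullet> z\<bar>)"
    and A: "A = {j. a j \<bullet> closest_point (polyhedral_set a b) x = b j}"
      "A = {j. a j \<bullet> closest_point (polyhedral_set a b') x = b' j}"
  shows "e * norm (closest_point (polyhedral_set a b') x - closest_point (polyhedral_set a b) x)
           \<le> (\<Sum>j\<in>A. \<bar>b' j - b j\<bar>)"
proof -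
  let ?p = "closest_point (polyhedral_set a b) x" and ?p' = "closest_point (polyhedral_set a b') x"
  have orth: "(x - closest_point (polyhedral_set a \<beta>) x) \<bullet> v = 0"
    if "A = {j. a j \<bullet> closest_point (polyhedral_set a \<beta>) x = \<beta> j}" "\<forall>j\<in>A. a j \<bullet> v = 0" for \<beta> v
  proof (rule closest_point_polyhedral_set_orthogonal)
    show "polyhedral_set a \<beta> \<noteq> {}" by (rule polyhedral_set_nonempty[OF c])
  qed (use that in auto)
  have "(?p' - ?p) \<bullet> v = 0" if "\<forall>j\<in>A. a j \<bullet> v = 0" for v
    using orth[OF A(1) that] orth[OF A(2) that] by (simp add: inner_diff_left)
  then have "e * norm (?p' - ?p) \<le> (\<Sum>j\<in>A. \<bar>a j \<bullet> (?p' - ?p)\<bar>)" by (intro e) blast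
  also have "\<dots> = (\<Sum>j\<in>A. \<bar>b' j - b j\<bar>)"
  proof (rule sum.cong)
    fix j assume "j \<in> A"
    then have "a j \<bullet> ?p = b j" "a j \<bullet> ?p' = b' j" using A by blast+
    then show "\<bar>a j \<bullet> (?p' - ?p)\<bar> = \<bar>b' j - b j\<bar>" by (simp add: inner_diff_right)
  qed simp
  finally show ?thesis .
qed

lemma closest_point_polyhedral_set_lipschitz_rhs:
  fixes a :: "'n::finite \<Rightarrow> 'v::euclidean_space"
  assumes c: "\<forall>j. 1 \<le> a j \<bullet> c"
  shows "\<exists>K\<ge>0. \<forall>x b b'. norm (closest_point (polyhedral_set a b') x - closest_point (polyhedral_set a b) x)
           \<le> K * (\<Sum>j\<in>UNIV. \<bar>b' j - b j\<bar>)"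
proof -
  obtain e where e: "e > 0"
    "\<And>A z. (\<forall>v. (\<forall>j\<in>A. a j \<bullet> v = 0) \<longrightarrow> z \<bullet> v = 0) \<Longrightarrow> e * norm z \<le> (\<Sum>j\<in>A. \<bar>a j \<bullet> z\<bar>)"
    using kernel_orthogonal_norm_le_sum_uniform by blast
  have "norm (closest_point (polyhedral_set a b') x - closest_point (polyhedral_set a b) x)
          \<le> (1 / e) * (\<Sum>j\<in>UNIV. \<bar>b' j - b j\<bar>)" for x b b'
  proof -
    \<comment> \<open>Move from b to b' along a segment: the parameters with a given active set form finitely
      many pieces, on each of which the projection moves at speed at most D / e.\<close>
    define D where "D = (\<Sum>j\<in>UNIV. \<bar>b' j - b j\<bar>)"
    define g where "g t = closest_point (polyhedral_set a (\<lambda>j. b j + t * (b' j - b j))) x" for t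
    define act where "act t = {j. a j \<bullet> g t = b j + t * (b' j - b j)}" for t
    have cont: "continuous_on UNIV g"
      unfolding g_def by (rule continuous_on_closest_point_polyhedral_path[OF c])
    have piece: "(D / e)-lipschitz_on {t. act t = A} g" for A
    proof (rule lipschitz_onI)
      fix t s assume "t \<in> {t. act t = A}" "s \<in> {t. act t = A}"
      then have "e * norm (g t - g s) \<le> (\<Sum>j\<in>A. \<bar>(b j + t * (b' j - b j)) - (b j + s * (b' j - b j))\<bar>)"
        unfolding g_def act_def by (intro closest_point_polyhedral_set_dist_le_same_active[OF c e(2)]) auto
      also have "\<dots> = (\<Sum>j\<in>A. \<bar>t - s\<bar> * \<bar>b' j - b j\<bar>)"
        by (intro sum.cong refl) (simp add: abs_mult[symmetric] algebra_simps)
      also have "\<dots> \<le> (\<Sum>j\<in>UNIV. \<bar>t - s\<bar> * \<bar>b' j - b j\<bar>)" by (intro sum_mono2) auto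
      also have "\<dots> = \<bar>t - s\<bar> * D" by (simp add: D_def sum_distrib_left)
      finally show "dist (g t) (g s) \<le> D / e * dist t s"
        using e(1) by (simp add: dist_norm dist_real_def field_simps)
    qed (use e(1) in \<open>simp add: D_def sum_nonneg\<close>)
    have "(D / e)-lipschitz_on {0..1} g"
      using cont piece by (rule lipschitz_on_finite_level_sets) (use e(1) in \<open>simp add: D_def sum_nonneg\<close>)
    from lipschitz_onD[OF this, of 1 0] have "dist (g 1) (g 0) \<le> D / e" by simp
    then show ?thesis by (simp add: g_def D_def dist_norm)
  qed
  then show ?thesis using e(1) by (intro exI[of _ "1 / e"]) auto
qed

section \<open>The proximal exponential-loss step\<close>

definition prox_exp_loss :: "('n::finite \<Rightarrow> 'v::real_inner) \<Rightarrow> real \<Rightarrow> 'v \<Rightarrow> 'v \<Rightarrow> real" where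
  "prox_exp_loss a lam w0 w = (\<Sum>j\<in>UNIV. exp (- (a j \<bullet> w))) + lam / 2 * (norm (w - w0))\<^sup>2"

definition prox_exp_stationary :: "('n::finite \<Rightarrow> 'v::real_inner) \<Rightarrow> real \<Rightarrow> 'v \<Rightarrow> 'v \<Rightarrow> bool" where
  "prox_exp_stationary a lam w0 w \<longleftrightarrow> lam *\<^sub>R (w - w0) = (\<Sum>j\<in>UNIV. exp (- (a j \<bullet> w)) *\<^sub>R a j)"

lemma prox_exp_loss_ge:
  assumes "prox_exp_stationary a lam w0 w"
  shows "prox_exp_loss a lam w0 v \<ge> prox_exp_loss a lam w0 w + lam / 2 * (norm (v - w))\<^sup>2"
proof -
  have "exp (- (a j \<bullet> v)) \<ge> exp (- (a j \<bullet> w)) - exp (- (a j \<bullet> w)) * (a j \<bullet> (v - w))" for j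
  proof -
    have "exp (- (a j \<bullet> w)) * (1 - a j \<bullet> (v - w)) \<le> exp (- (a j \<bullet> w)) * exp (- (a j \<bullet> (v - w)))"
      using exp_ge_add_one_self[of "- (a j \<bullet> (v - w))"] by (intro mult_left_mono) auto
    then show ?thesis by (simp add: algebra_simps inner_diff_right flip: exp_add)
  qed
  then have "(\<Sum>j\<in>UNIV. exp (- (a j \<bullet> v)))
      \<ge> (\<Sum>j\<in>UNIV. exp (- (a j \<bullet> w))) - (\<Sum>j\<in>UNIV. exp (- (a j \<bullet> w)) *\<^sub>R a j) \<bullet> (v - w)"
    by (simp add: inner_sum_left flip: sum_subtractf) (rule sum_mono, simp)
  also have "(\<Sum>j\<in>UNIV. exp (- (a j \<bullet> w)) *\<^sub>R a j) = lam *\<^sub>R (w - w0)"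
    using assms by (simp add: prox_exp_stationary_def)
  finally have exps: "(\<Sum>j\<in>UNIV. exp (- (a j \<bullet> v)))
      \<ge> (\<Sum>j\<in>UNIV. exp (- (a j \<bullet> w))) - lam * ((w - w0) \<bullet> (v - w))"
    by simp
  have "(norm (v - w0))\<^sup>2 = (norm (w - w0))\<^sup>2 + 2 * ((w - w0) \<bullet> (v - w)) + (norm (v - w))\<^sup>2"
    by (simp add: power2_norm_eq_inner algebra_simps inner_commute)
  then have "lam / 2 * (norm (v - w0))\<^sup>2
      = lam / 2 * (norm (w - w0))\<^sup>2 + lam * ((w - w0) \<bullet> (v - w)) + lam / 2 * (norm (v - w))\<^sup>2"
    by (simp add: field_simps)
  with exps show ?thesis unfolding prox_exp_loss_def by linarith
qed

lemma prox_exp_loss_argmin: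
  assumes "lam > 0" "prox_exp_stationary a lam w0 w"
  shows "(THE w. \<forall>v. prox_exp_loss a lam w0 w \<le> prox_exp_loss a lam w0 v) = w"
proof (rule the_equality)
  show "\<forall>v. prox_exp_loss a lam w0 w \<le> prox_exp_loss a lam w0 v"
  proof
    fix v
    have "lam / 2 * (norm (v - w))\<^sup>2 \<ge> 0" using assms(1) by simp
    with prox_exp_loss_ge[OF assms(2), of v] show "prox_exp_loss a lam w0 w \<le> prox_exp_loss a lam w0 v"
      by linarith
  qed
  fix w' assume "\<forall>v. prox_exp_loss a lam w0 w' \<le> prox_exp_loss a lam w0 v"
  then have "prox_exp_loss a lam w0 w' \<le> prox_exp_loss a lam w0 w" by blast
  with prox_exp_loss_ge[OF assms(2), of w'] have "lam / 2 * (norm (w' - w))\<^sup>2 \<le> 0" by linarith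
  then show "w' = w" using assms(1) by (simp add: mult_le_0_iff)
qed

lemma prox_exp_loss_has_min:
  fixes a :: "'n::finite \<Rightarrow> 'v::euclidean_space"
  assumes lam: "lam > 0"
  shows "\<exists>w. \<forall>v. prox_exp_loss a lam w0 w \<le> prox_exp_loss a lam w0 v"
proof -
  define f where "f = prox_exp_loss a lam w0"
  have f_ge: "f v \<ge> lam / 2 * (norm (v - w0))\<^sup>2" for v
    unfolding f_def prox_exp_loss_def by (simp add: sum_nonneg)
  define r where "r = sqrt (2 * f w0 / lam)"
  have "continuous_on (cball w0 r) f" unfolding f_def prox_exp_loss_def by (intro continuous_intros)
  moreover have "w0 \<in> cball w0 r" unfolding r_def using f_ge[of w0] lam by simp
  ultimately obtain w where w: "w \<in> cball w0 r" "\<And>v. v \<in> cball w0 r \<Longrightarrow> f w \<le> f v"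
    using continuous_attains_inf[OF compact_cball] by blast
  have "f w \<le> f v" for v
  proof (cases "v \<in> cball w0 r")
    case False
    then have "sqrt (2 * f w0 / lam) < norm (v - w0)" by (simp add: r_def dist_norm norm_minus_commute)
    then have "(sqrt (2 * f w0 / lam))\<^sup>2 < (norm (v - w0))\<^sup>2"
      using f_ge[of w0] lam by (intro power_strict_mono) auto
    then have "f w0 < lam / 2 * (norm (v - w0))\<^sup>2" using f_ge[of w0] lam by (simp add: field_simps)
    moreover have "f w \<le> f w0" using w(2) \<open>w0 \<in> cball w0 r\<close> by blast
    ultimately show ?thesis using f_ge[of v] by linarith
  qed (use w in auto)
  then show ?thesis unfolding f_def by blast
qed

lemma prox_exp_loss_min_imp_stationary:
  fixes a :: "'n::finite \<Rightarrow> 'v::euclidean_space"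
  assumes min: "\<And>v. prox_exp_loss a lam w0 w \<le> prox_exp_loss a lam w0 v"
  shows "prox_exp_stationary a lam w0 w"
proof -
  define G where "G = (\<Sum>j\<in>UNIV. exp (- (a j \<bullet> w)) *\<^sub>R a j)"
  define f' where "f' h = lam * ((w - w0) \<bullet> h) - G \<bullet> h" for h
  have "(prox_exp_loss a lam w0 has_derivative f') (at w)"
    unfolding prox_exp_loss_def power2_norm_eq_inner f'_def G_def
    by (auto intro!: derivative_eq_intros simp: inner_sum_left inner_sum_right inner_commute algebra_simps sum_negf)
  then have "f' = (\<lambda>h. 0)" by (rule has_derivative_local_min) (use min in simp)
  then have "f' (lam *\<^sub>R (w - w0) - G) = 0" by simp
  then have "(lam *\<^sub>R (w - w0) - G) \<bullet> (lam *\<^sub>R (w - w0) - G) = 0"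
    unfolding f'_def by (simp add: inner_diff_left inner_diff_right algebra_simps)
  then show ?thesis unfolding prox_exp_stationary_def G_def by simp
qed

lemma prox_exp_stationary_exists:
  fixes a :: "'n::finite \<Rightarrow> 'v::euclidean_space"
  assumes "lam > 0"
  obtains w where "prox_exp_stationary a lam w0 w"
  using prox_exp_loss_has_min[OF assms] prox_exp_loss_min_imp_stationary by blast

lemma prox_exp_stationary_nonexpansive:
  assumes lam: "lam > 0" and w: "prox_exp_stationary a lam w0 w" and w': "prox_exp_stationary a lam w0' w'"
  shows "norm (w - w') \<le> norm (w0 - w0')"
proof -
  have "lam * ((w - w') \<bullet> (w - w')) - lam * ((w0 - w0') \<bullet> (w - w'))
      = (lam *\<^sub>R (w - w0) - lam *\<^sub>R (w' - w0')) \<bullet> (w - w')"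
    by (simp add: algebra_simps inner_diff_left inner_diff_right)
  also have "\<dots> = (\<Sum>j\<in>UNIV. (exp (- (a j \<bullet> w)) - exp (- (a j \<bullet> w'))) * (a j \<bullet> w - a j \<bullet> w'))"
    using w w' unfolding prox_exp_stationary_def
    by (simp add: inner_diff_left inner_sum_left inner_diff_right algebra_simps flip: sum_subtractf)
  also have "\<dots> \<le> 0"
    by (intro sum_nonpos) (auto simp: mult_le_0_iff)
  finally have "lam * ((w - w') \<bullet> (w - w')) \<le> lam * ((w0 - w0') \<bullet> (w - w'))" by simp
  then have "(w - w') \<bullet> (w - w') \<le> (w0 - w0') \<bullet> (w - w')" by (rule mult_left_le_imp_le) (rule lam)
  also have "\<dots> \<le> norm (w0 - w0') * norm (w - w')" by (rule norm_cauchy_schwarz)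
  finally have "norm (w - w') * norm (w - w') \<le> norm (w0 - w0') * norm (w - w')"
    by (simp add: dot_square_norm power2_eq_square)
  then show ?thesis by (cases "w = w'") (auto simp: mult_le_cancel_right)
qed

lemma prox_exp_stationary_exp_iff:
  fixes a :: "'n::finite \<Rightarrow> 'v::real_inner"
  shows "prox_exp_stationary a (exp (- L)) w0 w \<longleftrightarrow> w - w0 = (\<Sum>j\<in>UNIV. exp (L - a j \<bullet> w) *\<^sub>R a j)"
proof -
  define S where "S = (\<Sum>j\<in>UNIV. exp (- (a j \<bullet> w)) *\<^sub>R a j)"
  have "(\<Sum>j\<in>UNIV. exp (L - a j \<bullet> w) *\<^sub>R a j) = exp L *\<^sub>R S"
    unfolding S_def by (simp add: scaleR_sum_right flip: exp_add)
  moreover have "exp (- L) *\<^sub>R v = S \<longleftrightarrow> v = exp L *\<^sub>R S" for v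
    by (auto simp: exp_minus)
  ultimately show ?thesis unfolding prox_exp_stationary_def S_def by simp
qed

lemma prox_exp_stationary_dist_centre:
  assumes c: "\<forall>j. 1 \<le> a j \<bullet> c" and L: "L \<ge> 0" and w: "prox_exp_stationary a (exp (- L)) w0 w"
  shows "norm (w - w0) \<le> 2 * norm (w0 - L *\<^sub>R c) + (\<Sum>j\<in>UNIV. norm (a j))"
proof -
  \<comment> \<open>L c is the exact solution for the centre L c - r, where all weights of r are at most 1.\<close>
  define r where "r = (\<Sum>j\<in>UNIV. exp (L - a j \<bullet> (L *\<^sub>R c)) *\<^sub>R a j)"
  have "prox_exp_stationary a (exp (- L)) (L *\<^sub>R c - r) (L *\<^sub>R c)"
    unfolding prox_exp_stationary_exp_iff r_def by simp
  from prox_exp_stationary_nonexpansive[OF exp_gt_zero w this]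
  have "norm (w - L *\<^sub>R c) \<le> norm (w0 - L *\<^sub>R c + r)" by (simp add: algebra_simps)
  also have "\<dots> \<le> norm (w0 - L *\<^sub>R c) + norm r" by (rule norm_triangle_ineq)
  also have "norm r \<le> (\<Sum>j\<in>UNIV. norm (a j))"
  proof -
    have "exp (L - a j \<bullet> (L *\<^sub>R c)) \<le> 1" for j
      using c L mult_left_mono[of 1 "a j \<bullet> c" L] by simp
    then have "norm (exp (L - a j \<bullet> (L *\<^sub>R c)) *\<^sub>R a j) \<le> norm (a j)" for j
      using mult_right_mono[of _ 1 "norm (a j)"] by simp
    then show ?thesis unfolding r_def by (intro order_trans[OF norm_sum] sum_mono)
  qed
  finally have "norm (w - L *\<^sub>R c) \<le> norm (w0 - L *\<^sub>R c) + (\<Sum>j\<in>UNIV. norm (a j))" by simp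
  then show ?thesis using norm_triangle_ineq[of "w - L *\<^sub>R c" "L *\<^sub>R c - w0"]
    by (simp add: norm_minus_commute)
qed

lemma prox_exp_stationary_exp_margin_le:
  assumes c: "\<forall>j. 1 \<le> a j \<bullet> c" and w: "prox_exp_stationary a (exp (- L)) w0 w"
  shows "exp (L - a i \<bullet> w) \<le> norm (w - w0) * norm c"
proof -
  have "exp (L - a i \<bullet> w) \<le> (\<Sum>j\<in>UNIV. exp (L - a j \<bullet> w))" by (rule member_le_sum) auto
  also have "\<dots> \<le> (\<Sum>j\<in>UNIV. exp (L - a j \<bullet> w) * (a j \<bullet> c))"
    using c by (intro sum_mono) simp
  also have "\<dots> = (w - w0) \<bullet> c"
    using w unfolding prox_exp_stationary_exp_iff by (simp add: inner_sum_left)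
  also have "\<dots> \<le> norm (w - w0) * norm c" by (rule norm_cauchy_schwarz)
  finally show ?thesis .
qed

lemma prox_exp_stationary_margin_ge:
  assumes c: "\<forall>j. 1 \<le> a j \<bullet> c" and L: "L \<ge> 1" and u: "norm u \<le> R"
    and w: "prox_exp_stationary a (exp (- L)) (L *\<^sub>R u) w"
  shows "L - ln L - ln ((2 * (R + norm c) + (\<Sum>j\<in>UNIV. norm (a j))) * norm c + 1) \<le> a i \<bullet> w"
proof -
  define B where "B = (2 * (R + norm c) + (\<Sum>j\<in>UNIV. norm (a j))) * norm c + 1"
  have SA: "(\<Sum>j\<in>UNIV. norm (a j)) \<ge> 0" by (simp add: sum_nonneg)
  have "R \<ge> 0" using u norm_ge_zero order_trans by blast
  have "norm (L *\<^sub>R u - L *\<^sub>R c) \<le> L * norm u + L * norm c"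
    using norm_triangle_ineq4[of "L *\<^sub>R u" "L *\<^sub>R c"] L by simp
  moreover have "L * norm u \<le> L * R" using u L by (simp add: mult_left_mono)
  ultimately have "norm (L *\<^sub>R u - L *\<^sub>R c) \<le> L * (R + norm c)" by (simp only: distrib_left)
  with prox_exp_stationary_dist_centre[OF c _ w] L SA
  have "norm (w - L *\<^sub>R u) \<le> L * (2 * (R + norm c) + (\<Sum>j\<in>UNIV. norm (a j)))"
    using mult_left_mono[OF L SA] by (simp add: algebra_simps)
  then have "exp (L - a i \<bullet> w) \<le> L * (2 * (R + norm c) + (\<Sum>j\<in>UNIV. norm (a j))) * norm c"
    by (rule order_trans[OF prox_exp_stationary_exp_margin_le[OF c w] mult_right_mono]) simp
  also have "\<dots> \<le> L * B" unfolding B_def using L by (simp add: algebra_simps)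
  finally have "exp (L - a i \<bullet> w) \<le> L * B" .
  moreover have "B \<ge> 1" unfolding B_def using \<open>R \<ge> 0\<close> SA by simp
  ultimately have "ln (exp (L - a i \<bullet> w)) \<le> ln (L * B)" using L by (subst ln_le_cancel_iff) auto
  then have "L - a i \<bullet> w \<le> ln L + ln B" using L \<open>B \<ge> 1\<close> by (simp add: ln_mult)
  then show ?thesis unfolding B_def by simp
qed

lemma prox_exp_stationary_eq_closest_point:
  fixes a :: "'n::finite \<Rightarrow> 'v::euclidean_space"
  assumes w: "prox_exp_stationary a (exp (- L)) w0 w" and "\<tau> \<ge> 0"
  defines "\<beta> j \<equiv> if a j \<bullet> w \<le> L + \<tau> then a j \<bullet> w else L"
    and "e \<equiv> \<Sum>j\<in>UNIV. (if a j \<bullet> w \<le> L + \<tau> then 0 else exp (L - a j \<bullet> w)) *\<^sub>R a j"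
  shows "closest_point (polyhedral_set a \<beta>) (w0 + e) = w"
proof -
  define \<mu> where "\<mu> j = (if a j \<bullet> w \<le> L + \<tau> then exp (L - a j \<bullet> w) else 0)" for j
  have "w - w0 = (\<Sum>j\<in>UNIV. \<mu> j *\<^sub>R a j) + e"
    using w unfolding prox_exp_stationary_exp_iff e_def \<mu>_def
    by (simp flip: sum.distrib scaleR_add_left) (rule sum.cong, auto)
  then show ?thesis
    using \<open>\<tau> \<ge> 0\<close> by (intro closest_point_polyhedral_set_eqI[where \<mu> = \<mu>])
      (auto simp: polyhedral_set_def \<beta>_def \<mu>_def algebra_simps split: if_splits)
qed

lemma one_le_ln_if_exp1_le:
  fixes x :: real
  shows "exp 1 \<le> x \<Longrightarrow> 1 \<le> ln x"
  by (metis exp_gt_zero ln_ge_iff order_less_le_trans)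

lemma prox_exp_stationary_closest_point_perturbed:
  fixes a :: "'n::finite \<Rightarrow> 'v::euclidean_space"
  assumes c: "\<forall>j. 1 \<le> a j \<bullet> c" and L: "L \<ge> exp 1" and u: "norm u \<le> R"
    and w: "prox_exp_stationary a (exp (- L)) (L *\<^sub>R u) w"
  obtains \<beta> e where "closest_point (polyhedral_set a \<beta>) (L *\<^sub>R u + e) = w" "norm e \<le> (\<Sum>j\<in>UNIV. norm (a j))"
    "\<And>j. \<bar>\<beta> j - L\<bar> \<le> ln ((2 * (R + norm c) + (\<Sum>j\<in>UNIV. norm (a j))) * norm c + 1) + ln L"
proof
  define \<beta> where "\<beta> j = (if a j \<bullet> w \<le> L + ln L then a j \<bullet> w else L)" for j
  define e where "e = (\<Sum>j\<in>UNIV. (if a j \<bullet> w \<le> L + ln L then 0 else exp (L - a j \<bullet> w)) *\<^sub>R a j)"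
  have lnL: "ln L \<ge> 1" using L by (rule one_le_ln_if_exp1_le)
  show "closest_point (polyhedral_set a \<beta>) (L *\<^sub>R u + e) = w"
    unfolding \<beta>_def e_def using prox_exp_stationary_eq_closest_point[OF w, of "ln L"] lnL by simp
  have "(if a j \<bullet> w \<le> L + ln L then 0 else exp (L - a j \<bullet> w)) \<le> 1" for j
    using lnL by auto
  then have "norm ((if a j \<bullet> w \<le> L + ln L then 0 else exp (L - a j \<bullet> w)) *\<^sub>R a j) \<le> norm (a j)" for j
    using mult_right_mono[of _ 1 "norm (a j)"] by simp
  then show "norm e \<le> (\<Sum>j\<in>UNIV. norm (a j))" unfolding e_def by (intro order_trans[OF norm_sum] sum_mono)
  have "R \<ge> 0" using u norm_ge_zero order_trans by blast
  then have "ln ((2 * (R + norm c) + (\<Sum>j\<in>UNIV. norm (a j))) * norm c + 1) \<ge> 0" by (simp add: sum_nonneg)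
  moreover have "L \<ge> 1" using L exp_ge_add_one_self[of 1] by linarith
  ultimately show "\<bar>\<beta> j - L\<bar> \<le> ln ((2 * (R + norm c) + (\<Sum>j\<in>UNIV. norm (a j))) * norm c + 1) + ln L" for j
    using prox_exp_stationary_margin_ge[OF c _ u w, of j] lnL unfolding \<beta>_def by auto
qed

lemma prox_exp_stationary_near_scaled_closest_point:
  fixes a :: "'n::finite \<Rightarrow> 'v::euclidean_space"
  assumes c: "\<forall>j. 1 \<le> a j \<bullet> c"
  shows "\<exists>K. \<forall>L u w. L \<ge> exp 1 \<longrightarrow> norm u \<le> R \<longrightarrow> prox_exp_stationary a (exp (- L)) (L *\<^sub>R u) w \<longrightarrow>
           norm (w - L *\<^sub>R closest_point (polyhedral_set a (\<lambda>_. 1)) u) \<le> K * ln L"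
proof -
  obtain Kp where Kp: "Kp \<ge> 0" "\<And>x b b'. norm (closest_point (polyhedral_set a b') x - closest_point (polyhedral_set a b) x)
      \<le> Kp * (\<Sum>j\<in>UNIV. \<bar>b' j - b j\<bar>)"
    using closest_point_polyhedral_set_lipschitz_rhs[OF c] by blast
  define SA where "SA = (\<Sum>j\<in>UNIV. norm (a j))"
  define lnB where "lnB = ln ((2 * (R + norm c) + SA) * norm c + 1)"
  define N where "N = real CARD('n)"
  have "norm (w - L *\<^sub>R closest_point (polyhedral_set a (\<lambda>_. 1)) u) \<le> (SA + Kp * N * (lnB + 1)) * ln L"
    if L: "L \<ge> exp 1" and u: "norm u \<le> R" and w: "prox_exp_stationary a (exp (- L)) (L *\<^sub>R u) w" for L u w
  proof -
    obtain \<beta> e where proj: "closest_point (polyhedral_set a \<beta>) (L *\<^sub>R u + e) = w"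
      and e: "norm e \<le> SA" and \<beta>: "\<And>j. \<bar>\<beta> j - L\<bar> \<le> lnB + ln L"
      using prox_exp_stationary_closest_point_perturbed[OF c L u w] unfolding SA_def lnB_def by blast
    have lnL: "ln L \<ge> 1" using L by (rule one_le_ln_if_exp1_le)
    have "L > 0" using L exp_gt_zero order_less_le_trans by blast
    have "R \<ge> 0" using u norm_ge_zero order_trans by blast
    then have "lnB \<ge> 0" unfolding lnB_def SA_def by (simp add: sum_nonneg)
    let ?P = "\<lambda>b x. closest_point (polyhedral_set a b) x"
    have "L *\<^sub>R ?P (\<lambda>_. 1) u = ?P (\<lambda>_. L) (L *\<^sub>R u)"
      using closest_point_polyhedral_set_scaleR[OF c \<open>L > 0\<close>, of "\<lambda>_. 1"] by simp
    then have "norm (w - L *\<^sub>R ?P (\<lambda>_. 1) u) = dist (?P \<beta> (L *\<^sub>R u + e)) (?P (\<lambda>_. L) (L *\<^sub>R u))"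
      unfolding proj dist_norm by simp
    also have "\<dots> \<le> dist (?P \<beta> (L *\<^sub>R u + e)) (?P \<beta> (L *\<^sub>R u)) + dist (?P \<beta> (L *\<^sub>R u)) (?P (\<lambda>_. L) (L *\<^sub>R u))"
      by (rule dist_triangle)
    also have "\<dots> \<le> norm e + Kp * (\<Sum>j\<in>UNIV. \<bar>\<beta> j - L\<bar>)"
      using closest_point_lipschitz[OF convex_polyhedral_set closed_polyhedral_set polyhedral_set_nonempty[OF c],
          of \<beta> "L *\<^sub>R u + e" "L *\<^sub>R u"] Kp(2)[where x = "L *\<^sub>R u" and b = "\<lambda>_. L" and b' = \<beta>]
      by (intro add_mono) (simp_all add: dist_norm)
    also have "\<dots> \<le> SA + Kp * (N * (lnB + ln L))"
      using e Kp(1) sum_mono[of UNIV "\<lambda>j. \<bar>\<beta> j - L\<bar>" "\<lambda>_. lnB + ln L", OF \<beta>]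
      by (intro add_mono mult_left_mono) (simp_all add: N_def)
    also have "\<dots> \<le> (SA + Kp * N * (lnB + 1)) * ln L"
    proof -
      have "0 \<le> (SA + Kp * N * lnB) * (ln L - 1)"
        using Kp(1) lnL \<open>lnB \<ge> 0\<close> by (intro mult_nonneg_nonneg add_nonneg_nonneg) (simp_all add: SA_def N_def sum_nonneg)
      then show ?thesis by (simp add: algebra_simps)
    qed
    finally show ?thesis .
  qed
  then show ?thesis by blast
qed

section \<open>Directions of nearly proportional vectors\<close>

lemma norm_sgn_diff_le:
  fixes p q :: "'a::real_normed_vector"
  assumes "q \<noteq> 0"
  shows "norm (sgn p - sgn q) \<le> 2 * norm (p - q) / norm q"
proof (cases "p = 0")
  case False
  have "sgn p - sgn q = (1 / norm p - 1 / norm q) *\<^sub>R p + (1 / norm q) *\<^sub>R (p - q)"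
    by (simp add: sgn_div_norm scaleR_diff_left scaleR_diff_right inverse_eq_divide)
  then have "norm (sgn p - sgn q) \<le> \<bar>1 / norm p - 1 / norm q\<bar> * norm p + norm (p - q) / norm q"
    using norm_triangle_ineq[of "(1 / norm p - 1 / norm q) *\<^sub>R p" "(1 / norm q) *\<^sub>R (p - q)"] by simp
  also have "\<bar>1 / norm p - 1 / norm q\<bar> * norm p = \<bar>norm q - norm p\<bar> / norm q"
    using False assms by (simp add: field_simps abs_div)
  also have "\<dots> \<le> norm (p - q) / norm q"
    using norm_triangle_ineq3[of p q] by (simp add: abs_minus_commute divide_right_mono)
  finally show ?thesis by simp
qed (use assms in \<open>simp add: norm_sgn\<close>)

lemma norm_sgn_diff_scaled_le:
  fixes w p :: "'a::real_normed_vector"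
  assumes "L > 0" "\<eta> > 0" "\<eta> \<le> norm p"
  shows "norm (sgn w - sgn p) \<le> 2 * norm (w - L *\<^sub>R p) / (L * \<eta>)"
proof -
  have "norm p > 0" using assms(2,3) by linarith
  have Lp: "L * \<eta> \<le> norm (L *\<^sub>R p)" using assms by (simp add: mult_left_mono)
  from \<open>norm p > 0\<close> assms(1) have "L *\<^sub>R p \<noteq> 0" by simp
  have "norm (sgn w - sgn p) = norm (sgn w - sgn (L *\<^sub>R p))" using assms(1) by (simp add: sgn_scaleR)
  also have "\<dots> \<le> 2 * norm (w - L *\<^sub>R p) / norm (L *\<^sub>R p)" by (rule norm_sgn_diff_le) fact
  also have "\<dots> \<le> 2 * norm (w - L *\<^sub>R p) / (L * \<eta>)"
    using Lp assms \<open>norm p > 0\<close> by (intro divide_left_mono mult_pos_pos) auto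
  finally show ?thesis .
qed

lemma exp1_le_ln_inverse:
  fixes lam :: real
  assumes "0 < lam" "lam < exp (- exp 1)"
  shows "exp 1 \<le> ln (1 / lam)"
proof -
  have "ln lam < ln (exp (- exp 1))" using assms by (simp only: ln_less_cancel_iff exp_gt_zero)
  then show ?thesis using assms by (simp add: ln_div)
qed

lemma tendsto_sgn_diff_zero:
  fixes w :: "real \<Rightarrow> nat \<Rightarrow> 'a::real_normed_vector" and p :: "nat \<Rightarrow> 'a" and kf :: "real \<Rightarrow> nat"
  assumes err: "\<forall>\<^sub>F lam in at_right 0. \<forall>k. norm (w lam k - ln (1 / lam) *\<^sub>R p k) \<le> C * real k * ln (ln (1 / lam))"
    and "C \<ge> 0" and p: "\<eta> > 0" "\<And>k. k \<ge> 1 \<Longrightarrow> \<eta> \<le> norm (p k)"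
    and kf: "(\<lambda>lam. real (kf lam)) \<in> o[at_right 0](\<lambda>lam. ln (1 / lam) / ln (ln (1 / lam)))"
  shows "((\<lambda>lam. sgn (w lam (kf lam)) - sgn (p (kf lam))) \<longlongrightarrow> 0) (at_right 0)"
proof (rule Lim_null_comparison)
  show "((\<lambda>lam. 2 * C / \<eta> * (real (kf lam) / (ln (1 / lam) / ln (ln (1 / lam))))) \<longlongrightarrow> 0) (at_right 0)"
    by (rule tendsto_mult_right_zero[OF smalloD_tendsto[OF kf]])
  have "\<forall>\<^sub>F lam in at_right (0::real). 0 < lam \<and> lam < exp (- exp 1)"
    by (rule eventually_at_rightI[of 0 "exp (- exp 1)"]) auto
  with err show "\<forall>\<^sub>F lam in at_right 0. norm (sgn (w lam (kf lam)) - sgn (p (kf lam)))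
          \<le> 2 * C / \<eta> * (real (kf lam) / (ln (1 / lam) / ln (ln (1 / lam))))"
  proof eventually_elim
    case (elim lam)
    define L k where "L = ln (1 / lam)" and "k = kf lam"
    have "exp 1 \<le> L" unfolding L_def using exp1_le_ln_inverse elim(2) by blast
    then have L: "L > 0" "ln L \<ge> 1"
      using exp_gt_zero[of 1] one_le_ln_if_exp1_le by (linarith, blast)
    have err_k: "norm (w lam k - L *\<^sub>R p k) \<le> C * real k * ln L" using elim(1) unfolding L_def k_def by blast
    have "norm (sgn (w lam k) - sgn (p k)) \<le> 2 * C / \<eta> * (real k / (L / ln L))"
    proof (cases "k = 0")
      case True
      with err_k L show ?thesis by (simp add: sgn_scaleR)
    next
      case False
      then have "norm (sgn (w lam k) - sgn (p k)) \<le> 2 * norm (w lam k - L *\<^sub>R p k) / (L * \<eta>)"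
        using L p by (intro norm_sgn_diff_scaled_le) auto
      also have "\<dots> \<le> 2 * (C * real k * ln L) / (L * \<eta>)"
        using err_k L p(1) by (intro divide_right_mono) auto
      also have "\<dots> = 2 * C / \<eta> * (real k / (L / ln L))"
        using L p(1) by (simp add: field_simps)
      finally show ?thesis .
    qed
    then show ?case unfolding L_def k_def .
  qed
qed

section \<open>Local-GD and the Parallel Projection Method\<close>

lemma norm_mean_diff_le:
  fixes f g :: "'m::finite \<Rightarrow> 'a::real_normed_vector"
  assumes "\<And>i. norm (f i - g i) \<le> r"
  shows "norm ((1 / real CARD('m)) *\<^sub>R (\<Sum>i\<in>UNIV. f i) - (1 / real CARD('m)) *\<^sub>R (\<Sum>i\<in>UNIV. g i)) \<le> r"
proof -
  have "norm ((1 / real CARD('m)) *\<^sub>R (\<Sum>i\<in>UNIV. f i) - (1 / real CARD('m)) *\<^sub>R (\<Sum>i\<in>UNIV. g i))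
      = (1 / real CARD('m)) * norm (\<Sum>i\<in>UNIV. f i - g i)"
    by (simp flip: scaleR_diff_right sum_subtractf)
  also have "\<dots> \<le> (1 / real CARD('m)) * (\<Sum>i\<in>(UNIV::'m set). r)"
    using assms by (intro mult_left_mono order_trans[OF norm_sum] sum_mono) auto
  also have "\<dots> = r" by simp
  finally show ?thesis .
qed

lemma norm_mean_minus_le:
  fixes f :: "'m::finite \<Rightarrow> 'a::real_normed_vector"
  assumes "\<And>i. norm (f i - z) \<le> r"
  shows "norm ((1 / real CARD('m)) *\<^sub>R (\<Sum>i\<in>UNIV. f i) - z) \<le> r"
  using norm_mean_diff_le[of f "\<lambda>_. z", OF assms] by (simp add: sum_constant_scaleR)

definition signed_point :: "real^'d^'n^'m \<Rightarrow> ('m \<Rightarrow> 'n \<Rightarrow> real) \<Rightarrow> 'm \<Rightarrow> 'n \<Rightarrow> real^'d" where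
  "signed_point X y i j = y i j *\<^sub>R (X $ i $ j)"

lemma Cset_eq_polyhedral_set: "Cset X y i = polyhedral_set (signed_point X y i) (\<lambda>_. 1)"
  unfolding Cset_def polyhedral_set_def signed_point_def by simp

lemma local_min_stationary:
  assumes "lam > 0"
  shows "prox_exp_stationary (signed_point X y i) lam w0 (local_min X y lam w0 i)"
proof -
  obtain w where w: "prox_exp_stationary (signed_point X y i) lam w0 w"
    using prox_exp_stationary_exists[OF assms] .
  have "local_obj X y lam w0 i = prox_exp_loss (signed_point X y i) lam w0"
    unfolding local_obj_def prox_exp_loss_def signed_point_def by (simp add: fun_eq_iff)
  then have "local_min X y lam w0 i = w"
    unfolding local_min_def using prox_exp_loss_argmin[OF assms w] by simp
  with w show ?thesis by simp
qed

lemma ppm_dist_antimono: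
  assumes wb: "\<forall>i. wb \<in> Cset X y i" and "m \<le> k"
  shows "norm (ppm X y k - wb) \<le> norm (ppm X y m - wb)"
proof -
  have "norm (closest_point (Cset X y i) (ppm X y n) - wb) \<le> norm (ppm X y n - wb)" for i n
    using closest_point_lipschitz[of "Cset X y i" "ppm X y n" wb] closest_point_self[of wb] wb
    unfolding Cset_eq_polyhedral_set by (auto simp: convex_polyhedral_set closed_polyhedral_set dist_norm)
  then have "norm (ppm X y (Suc n) - wb) \<le> norm (ppm X y n - wb)" for n
    by (simp add: norm_mean_minus_le)
  then show ?thesis using \<open>m \<le> k\<close> by (rule lift_Suc_antimono_le)
qed

lemma ppm_one_dist_less:
  assumes wb: "\<forall>i. wb \<in> Cset X y i"
  shows "norm (ppm X y 1 - wb) < norm wb"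
proof -
  have "0 \<notin> Cset X y i" for i by (simp add: Cset_def)
  then have less: "norm (closest_point (Cset X y i) 0 - wb) < norm wb" for i
    using dist_closest_point_less[of "Cset X y i" wb 0] wb unfolding Cset_eq_polyhedral_set
    by (auto simp: convex_polyhedral_set closed_polyhedral_set dist_norm)
  define r where "r = Max (range (\<lambda>i. norm (closest_point (Cset X y i) 0 - wb)))"
  have "norm (ppm X y 1 - wb) \<le> r"
    by (simp add: r_def norm_mean_minus_le)
  also have "r < norm wb" unfolding r_def using less by simp
  finally show ?thesis .
qed

lemma ppm_bounded:
  assumes "separable X y"
  obtains R where "\<And>k. norm (ppm X y k) \<le> R"
proof -
  obtain wb where wb: "\<forall>i. wb \<in> Cset X y i" using assms unfolding separable_def by blast
  show thesis
  proof (rule that)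
    show "norm (ppm X y k) \<le> 2 * norm wb" for k
      using ppm_dist_antimono[OF wb, of 0 k] norm_triangle_ineq[of "ppm X y k - wb" wb] by simp
  qed
qed

lemma ppm_norm_bounded_below:
  assumes "separable X y"
  obtains \<eta> where "\<eta> > 0" "\<And>k. k \<ge> 1 \<Longrightarrow> \<eta> \<le> norm (ppm X y k)"
proof -
  obtain wb where wb: "\<forall>i. wb \<in> Cset X y i" using assms unfolding separable_def by blast
  show thesis
  proof (rule that)
    show "norm wb - norm (ppm X y 1 - wb) > 0" using ppm_one_dist_less[OF wb] by simp
    show "norm wb - norm (ppm X y 1 - wb) \<le> norm (ppm X y k)" if "k \<ge> 1" for k
      using ppm_dist_antimono[OF wb that] norm_triangle_ineq[of "ppm X y k" "wb - ppm X y k"]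
      by (simp add: norm_minus_commute)
  qed
qed

lemma local_min_near_scaled_projection:
  fixes X :: "real^'d^'n::finite^'m::finite"
  assumes sep: "separable X y"
  obtains C where "C \<ge> 0" "\<And>lam u i. 0 < (lam::real) \<Longrightarrow> lam < exp (- exp 1) \<Longrightarrow> norm u \<le> R \<Longrightarrow>
      norm (local_min X y lam (ln (1 / lam) *\<^sub>R u) i - ln (1 / lam) *\<^sub>R closest_point (Cset X y i) u)
        \<le> C * ln (ln (1 / lam))"
proof -
  obtain wb where "\<forall>i. wb \<in> Cset X y i" using sep unfolding separable_def by blast
  then have c: "\<forall>j. 1 \<le> signed_point X y i j \<bullet> wb" for i
    unfolding Cset_eq_polyhedral_set polyhedral_set_def by blast
  have "\<forall>i. \<exists>K. \<forall>L u w. L \<ge> exp 1 \<longrightarrow> norm u \<le> R \<longrightarrow>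
      prox_exp_stationary (signed_point X y i) (exp (- L)) (L *\<^sub>R u) w \<longrightarrow>
      norm (w - L *\<^sub>R closest_point (Cset X y i) u) \<le> K * ln L"
    unfolding Cset_eq_polyhedral_set using prox_exp_stationary_near_scaled_closest_point[OF c] by blast
  then obtain K where K: "\<forall>i L u w. L \<ge> exp 1 \<longrightarrow> norm u \<le> R \<longrightarrow>
      prox_exp_stationary (signed_point X y i) (exp (- L)) (L *\<^sub>R u) w \<longrightarrow>
      norm (w - L *\<^sub>R closest_point (Cset X y i) u) \<le> K i * ln L"
    by (auto dest!: choice)
  show thesis
  proof (rule that)
    show "(\<Sum>i\<in>UNIV. \<bar>K i\<bar>) \<ge> 0" by (simp add: sum_nonneg)
    fix lam :: real and u :: "real^'d" and i assume lam: "0 < lam" "lam < exp (- exp 1)" and u: "norm u \<le> R"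
    define L where "L = ln (1 / lam)"
    have L: "L \<ge> exp 1" "exp (- L) = lam" unfolding L_def using exp1_le_ln_inverse[OF lam] lam by (auto simp: ln_div)
    then have "ln L \<ge> 0" using one_le_ln_if_exp1_le[of L] by linarith
    have "norm (local_min X y lam (L *\<^sub>R u) i - L *\<^sub>R closest_point (Cset X y i) u) \<le> K i * ln L"
      using K[rule_format, OF L(1) u, of i] local_min_stationary[OF lam(1)] unfolding L(2) by blast
    also have "\<dots> \<le> (\<Sum>i\<in>UNIV. \<bar>K i\<bar>) * ln L"
      using \<open>ln L \<ge> 0\<close> member_le_sum[of i UNIV "\<lambda>i. \<bar>K i\<bar>"] by (intro mult_right_mono) auto
    finally show "norm (local_min X y lam (L *\<^sub>R u) i - L *\<^sub>R closest_point (Cset X y i) u)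
        \<le> (\<Sum>i\<in>UNIV. \<bar>K i\<bar>) * ln L" .
  qed
qed

lemma lgd_ppm_error_bound:
  fixes X :: "real^'d^'n::finite^'m::finite"
  assumes sep: "separable X y"
  obtains C where "C \<ge> 0" "\<And>lam k. 0 < lam \<Longrightarrow> lam < exp (- exp 1) \<Longrightarrow>
      norm (lgd X y lam k - ln (1 / lam) *\<^sub>R ppm X y k) \<le> C * real k * ln (ln (1 / lam))"
proof -
  obtain R where R: "\<And>k. norm (ppm X y k) \<le> R" using ppm_bounded[OF sep] by metis
  obtain C where "C \<ge> 0" and near: "\<And>lam u i. 0 < lam \<Longrightarrow> lam < exp (- exp 1) \<Longrightarrow> norm u \<le> R \<Longrightarrow>
      norm (local_min X y lam (ln (1 / lam) *\<^sub>R u) i - ln (1 / lam) *\<^sub>R closest_point (Cset X y i) u)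
        \<le> C * ln (ln (1 / lam))"
    using local_min_near_scaled_projection[OF sep] by metis
  have "norm (lgd X y lam k - ln (1 / lam) *\<^sub>R ppm X y k) \<le> C * real k * ln (ln (1 / lam))"
    if lam: "0 < lam" "lam < exp (- exp 1)" for lam k
  proof (induction k)
    case (Suc k)
    let ?L = "ln (1 / lam)" and ?T = "\<lambda>w i. local_min X y lam w i"
    let ?P = "\<lambda>i. closest_point (Cset X y i) (ppm X y k)"
    have "norm (?T (lgd X y lam k) i - ?T (?L *\<^sub>R ppm X y k) i) \<le> C * real k * ln ?L" for i
      using prox_exp_stationary_nonexpansive[OF lam(1) local_min_stationary[OF lam(1)] local_min_stationary[OF lam(1)]]
        Suc.IH by (rule order_trans)
    then have "norm (?T (lgd X y lam k) i - ?L *\<^sub>R ?P i) \<le> C * real k * ln ?L + C * ln ?L" for i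
      using near[OF lam R] by (rule norm_diff_triangle_le)
    from norm_mean_diff_le[OF this]
    show ?case by (simp add: scaleR_sum_right algebra_simps)
  qed simp
  with \<open>C \<ge> 0\<close> show thesis by (rule that)
qed

theorem lemma2:
  fixes y :: "'m::finite \<Rightarrow> 'n::finite \<Rightarrow> real"
  assumes "\<forall>i j. y i j = 1 \<or> y i j = -1"
  shows "AE X in (lborel :: (real^'d^'n^'m) measure).
     separable X y \<longrightarrow>
       (\<exists>C. \<forall>\<^sub>F lam in at_right 0. \<forall>k.
            norm (lgd X y lam k - ln (1 / lam) *\<^sub>R ppm X y k) \<le> C * real k * ln (ln (1 / lam)))
     \<and> (\<forall>kf :: real \<Rightarrow> nat.
            (\<lambda>lam. real (kf lam)) \<in> o[at_right 0](\<lambda>lam. ln (1 / lam) / ln (ln (1 / lam))) \<longrightarrow>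
            ((\<lambda>lam. sgn (lgd X y lam (kf lam)) - sgn (ppm X y (kf lam))) \<longlongrightarrow> 0) (at_right 0))"
proof (rule AE_I2, rule impI)
  fix X :: "real^'d^'n^'m"
  assume sep: "separable X y"
  obtain C where "C \<ge> 0" and bound: "\<And>lam k. 0 < lam \<Longrightarrow> lam < exp (- exp 1) \<Longrightarrow>
      norm (lgd X y lam k - ln (1 / lam) *\<^sub>R ppm X y k) \<le> C * real k * ln (ln (1 / lam))"
    using lgd_ppm_error_bound[OF sep] by metis
  obtain \<eta> where \<eta>: "\<eta> > 0" "\<And>k. k \<ge> 1 \<Longrightarrow> \<eta> \<le> norm (ppm X y k)"
    using ppm_norm_bounded_below[OF sep] by metis
  have err: "\<forall>\<^sub>F lam in at_right 0. \<forall>k.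
      norm (lgd X y lam k - ln (1 / lam) *\<^sub>R ppm X y k) \<le> C * real k * ln (ln (1 / lam))"
    using bound by (intro eventually_at_rightI[of 0 "exp (- exp 1)"]) auto
  show "(\<exists>C. \<forall>\<^sub>F lam in at_right 0. \<forall>k.
            norm (lgd X y lam k - ln (1 / lam) *\<^sub>R ppm X y k) \<le> C * real k * ln (ln (1 / lam)))
     \<and> (\<forall>kf :: real \<Rightarrow> nat.
            (\<lambda>lam. real (kf lam)) \<in> o[at_right 0](\<lambda>lam. ln (1 / lam) / ln (ln (1 / lam))) \<longrightarrow>
            ((\<lambda>lam. sgn (lgd X y lam (kf lam)) - sgn (ppm X y (kf lam))) \<longlongrightarrow> 0) (at_right 0))"
    using err tendsto_sgn_diff_zero[OF err \<open>C \<ge> 0\<close> \<eta>] by blast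
qed

end
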